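(* For $1<\alpha<\infty$, the norm of the Ces\`aro operator on the $\alpha$-Bloch space satisfies $\|\mathcal{C}\|_{\mathcal{B}^\alpha\to\mathcal{B}^\alpha}\ge\frac32$.
   Context: $\mathbb{D}$ is the open unit disc and $H(\mathbb{D})$ the space of analytic functions on $\mathbb{D}$. For $f(z)=\sum_{k\ge0}a_kz^k\in H(\mathbb{D})$ the Ces\`aro operator is $\mathcal{C}(f)(z)=\sum_{n\ge0}\Big(\frac{1}{n+1}\sum_{k=0}^n a_k\Big)z^n=\int_0^1\frac{f(tz)}{1-tz}\,dt$. For $\alpha>0$ the $\alpha$-Bloch space $\mathcal{B}^\alpha$ consists of $f\in H(\mathbb{D})$ with $\sup_{z\in\mathbb{D}}(1-|z|^2)^\alpha|f'(z)|<\infty$, normed by $\|f\|_{\mathcal{B}^\alpha}=|f(0)|+\sup_{z\in\mathbb{D}}(1-|z|^2)^\alpha|f'(z)|$. Operator norms are $\|\mathcal{C}\|_{X\to Y}=\sup\{\|\mathcal{C}f\|_Y:\|f\|_X\le 1\}$. *)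

theory Defs
  imports "HOL-Analysis.Analysis"
begin

text \<open>Cesaro operator via its integral representation
  C(f)(z) = int_0^1 f(tz)/(1 - tz) dt, for f analytic on the unit disc.\<close>
definition cesaro :: "(complex \<Rightarrow> complex) \<Rightarrow> complex \<Rightarrow> complex" where
  "cesaro f = (\<lambda>z. integral {0..1::real}
       (\<lambda>t. f (of_real t * z) / (1 - of_real t * z)))"

text \<open>alpha-Bloch norm, extended-real valued (infinite iff f is not in the space).\<close>
definition bloch_norm :: "real \<Rightarrow> (complex \<Rightarrow> complex) \<Rightarrow> ereal" where
  "bloch_norm \<alpha> f = ereal (norm (f 0)) +
     (SUP z\<in>ball 0 1. ereal ((1 - (norm z)\<^sup>2) powr \<alpha> * norm (deriv f z)))"

definition bloch_space :: "real \<Rightarrow> (complex \<Rightarrow> complex) set" where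
  "bloch_space \<alpha> = {f. f holomorphic_on ball 0 1 \<and> bloch_norm \<alpha> f < \<infinity>}"

definition cesaro_bloch_opnorm :: "real \<Rightarrow> ereal" where
  "cesaro_bloch_opnorm \<alpha> =
     (SUP f\<in>{f\<in>bloch_space \<alpha>. bloch_norm \<alpha> f \<le> 1}. bloch_norm \<alpha> (cesaro f))"

end

theory Submission
  imports Defs
begin

text \<open>Test the operator on the constant function 1, which has Bloch norm 1 for every \<alpha>.
  Its image C(1)(z) = -log(1 - z)/z = 1 + z/2 + z^2/3 + ... has value 1 and derivative 1/2
  at the origin, and the point z = 0 alone contributes 1 + 1/2 to the Bloch norm of C(1).\<close>

lemma of_real_mult_neq_one:
  fixes z :: "'a::real_normed_algebra_1"
  assumes "t \<in> {0..1}" "norm z < 1"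
  shows "of_real t * z \<noteq> 1"
proof
  assume "of_real t * z = 1"
  then have "1 = \<bar>t\<bar> * norm z"
    by (metis norm_of_real norm_one norm_scaleR scaleR_conv_of_real)
  also have "\<dots> < 1"
    using assms mult_left_le_one_le[of "norm z" t] by auto
  finally show False by simp
qed

lemma cesaro_at_0: "cesaro f 0 = f 0"
  by (simp add: cesaro_def)

lemma cesaro_one_has_field_derivative_0:
  "(cesaro (\<lambda>_. 1) has_field_derivative 1/2) (at 0)"
proof -
  let ?d = "\<lambda>(z::complex) (t::real). of_real t / (1 - of_real t * z)\<^sup>2"
  have "(cesaro (\<lambda>_. 1) has_field_derivative integral {0..1} (?d 0)) (at 0 within ball 0 1)"
    unfolding cesaro_def cbox_interval[symmetric]
  proof (rule leibniz_rule_field_derivative)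
    fix z :: complex and t :: real
    assume "z \<in> ball 0 1" "t \<in> cbox 0 1"
    then have "of_real t * z \<noteq> 1"
      by (intro of_real_mult_neq_one) auto
    then show "((\<lambda>z. 1 / (1 - of_real t * z)) has_field_derivative ?d z t) (at z within ball 0 1)"
      by (auto intro!: derivative_eq_intros simp: power2_eq_square)
  next
    fix z :: complex
    assume "z \<in> ball 0 1"
    then have "continuous_on (cbox 0 1) (\<lambda>t::real. 1 / (1 - of_real t * z))"
      by (intro continuous_intros) (auto dest: of_real_mult_neq_one)
    then show "(\<lambda>t. 1 / (1 - of_real t * z)) integrable_on cbox 0 1"
      by (rule integrable_continuous)
  next
    show "continuous_on (ball 0 1 \<times> cbox 0 1) (\<lambda>(z, t). ?d z t)"
      unfolding case_prod_beta
      by (intro continuous_intros) (auto dest: of_real_mult_neq_one)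
  qed auto
  moreover have "integral {0..1} (?d 0) = 1/2"
    using integral_unique[OF has_integral_of_real[OF ident_has_integral[of 0 1], where 'b=complex]]
    by simp
  moreover have "at (0::complex) within ball 0 1 = at 0"
    by (rule at_within_open) auto
  ultimately show ?thesis
    by metis
qed

lemma bloch_norm_const: "bloch_norm \<alpha> (\<lambda>_. c) = ereal (norm c)"
  by (simp add: bloch_norm_def)

lemma const_in_bloch_space: "(\<lambda>_. c) \<in> bloch_space \<alpha>"
  by (simp add: bloch_space_def bloch_norm_const)

lemma bloch_norm_ge_at_0: "ereal (norm (f 0) + norm (deriv f 0)) \<le> bloch_norm \<alpha> f"
proof -
  have "ereal (norm (deriv f 0)) \<le> (SUP z\<in>ball 0 1. ereal ((1 - (norm z)\<^sup>2) powr \<alpha> * norm (deriv f z)))"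
    by (rule SUP_upper2[of 0]) auto
  then show ?thesis
    unfolding bloch_norm_def by (metis add_left_mono plus_ereal.simps(1))
qed

lemma bloch_norm_cesaro_le_opnorm:
  assumes "f \<in> bloch_space \<alpha>" "bloch_norm \<alpha> f \<le> 1"
  shows "bloch_norm \<alpha> (cesaro f) \<le> cesaro_bloch_opnorm \<alpha>"
  unfolding cesaro_bloch_opnorm_def by (rule SUP_upper) (use assms in simp)

theorem theorem6p3:
  fixes \<alpha> :: real
  assumes "1 < \<alpha>"
  shows "ereal (3/2) \<le> cesaro_bloch_opnorm \<alpha>"
proof -
  have "ereal (3/2) = ereal (norm (cesaro (\<lambda>_. 1) 0) + norm (deriv (cesaro (\<lambda>_. 1)) 0))"
    by (simp add: cesaro_at_0 DERIV_imp_deriv[OF cesaro_one_has_field_derivative_0])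
  also have "\<dots> \<le> bloch_norm \<alpha> (cesaro (\<lambda>_. 1))"
    by (rule bloch_norm_ge_at_0)
  also have "\<dots> \<le> cesaro_bloch_opnorm \<alpha>"
    by (rule bloch_norm_cesaro_le_opnorm) (simp_all add: const_in_bloch_space bloch_norm_const)
  finally show ?thesis .
qed

end
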